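(* Let $n,d$ be integers with $2<d<n/2$, $S=\{1,2,\ldots,d\}\subset\mathbb Z_n$, and $\mathbb K$ a field of characteristic $0$. Then \[H_0^{\mathrm{path}}(\vec C_n^S;\mathbb K)\cong\mathbb K,\qquad H_1^{\mathrm{path}}(\vec C_n^S;\mathbb K)\cong\mathbb K,\qquad H_m^{\mathrm{path}}(\vec C_n^S;\mathbb K)=0\ \ (m\ge2).\]
   Context: GLMY path complex over a field $\mathbb K$ of characteristic $0$: elementary paths $e_{v_0\cdots v_n}$, boundary $\partial e_{v_0\cdots v_n}=\sum_{j}(-1)^j e_{v_0\cdots\widehat{v_j}\cdots v_n}$, paths with two equal consecutive vertices set to $0$; $A_n(G)$ = span of paths along arrows of $G$; $\Omega_0=A_0$, $\Omega_1=A_1$, $\Omega_n=\{u\in A_n:\partial u\in A_{n-1}\}$; $H^{\mathrm{path}}_m$ is the homology of $(\Omega_*,\partial)$. The circulant digraph $\vec{C}_n^S$ has vertex set $\mathbb Z_n$ and an arrow $a\to a+s$ for each $a\in\mathbb Z_n$, $s\in S$. *)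

theory Defs
  imports Main
begin

text \<open>GLMY path homology of a digraph with finite vertex set V and arrow relation E,
  with coefficients in a field 'k. Chains are functions from vertex lists (elementary
  paths) to 'k.\<close>

definition regular_path :: "'v list \<Rightarrow> bool" where
  "regular_path w \<longleftrightarrow> (\<forall>i. Suc i < length w \<longrightarrow> w ! i \<noteq> w ! Suc i)"

definition delete_at :: "nat \<Rightarrow> 'v list \<Rightarrow> 'v list" where
  "delete_at j u = take j u @ drop (Suc j) u"

text \<open>Boundary: coefficient of the regular path w in the boundary of c
  (non-regular faces are set to 0; the boundary of a 0-path is 0).\<close>
definition path_bd :: "'v set \<Rightarrow> ('v list \<Rightarrow> 'k::comm_ring_1) \<Rightarrow> 'v list \<Rightarrow> 'k" where
  "path_bd V c w =
     (if regular_path w \<and> w \<noteq> [] then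
        (\<Sum>u\<in>{u. length u = Suc (length w) \<and> set u \<subseteq> V}.
            c u * (\<Sum>j<length u. if delete_at j u = w then (-1) ^ j else 0))
      else 0)"

definition allowed_paths :: "'v set \<Rightarrow> ('v \<Rightarrow> 'v \<Rightarrow> bool) \<Rightarrow> nat \<Rightarrow> 'v list set" where
  "allowed_paths V E p = {w. length w = Suc p \<and> set w \<subseteq> V \<and>
       (\<forall>i. Suc i < length w \<longrightarrow> E (w ! i) (w ! Suc i))}"

definition A_space :: "'k itself \<Rightarrow> 'v set \<Rightarrow> ('v \<Rightarrow> 'v \<Rightarrow> bool) \<Rightarrow> nat \<Rightarrow> ('v list \<Rightarrow> 'k::comm_ring_1) set" where
  "A_space K V E p = {c. \<forall>w. c w \<noteq> 0 \<longrightarrow> w \<in> allowed_paths V E p}"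

definition Omega_space :: "'k itself \<Rightarrow> 'v set \<Rightarrow> ('v \<Rightarrow> 'v \<Rightarrow> bool) \<Rightarrow> nat \<Rightarrow> ('v list \<Rightarrow> 'k::comm_ring_1) set" where
  "Omega_space K V E p = {c \<in> A_space K V E p. p = 0 \<or> path_bd V c \<in> A_space K V E (p - 1)}"

definition path_cycles :: "'k itself \<Rightarrow> 'v set \<Rightarrow> ('v \<Rightarrow> 'v \<Rightarrow> bool) \<Rightarrow> nat \<Rightarrow> ('v list \<Rightarrow> 'k::comm_ring_1) set" where
  "path_cycles K V E m = {c \<in> Omega_space K V E m. path_bd V c = (\<lambda>_. 0)}"

definition path_boundaries :: "'k itself \<Rightarrow> 'v set \<Rightarrow> ('v \<Rightarrow> 'v \<Rightarrow> bool) \<Rightarrow> nat \<Rightarrow> ('v list \<Rightarrow> 'k::comm_ring_1) set" where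
  "path_boundaries K V E m = path_bd V ` Omega_space K V E (Suc m)"

text \<open>H_m \<cong> K: the quotient Z_m / B_m is spanned by the class of a single cycle z with
  nonzero class, i.e. it is one-dimensional.\<close>
definition path_homology_is_K :: "'k::field itself \<Rightarrow> 'v set \<Rightarrow> ('v \<Rightarrow> 'v \<Rightarrow> bool) \<Rightarrow> nat \<Rightarrow> bool" where
  "path_homology_is_K K V E m \<longleftrightarrow>
     (\<exists>z\<in>path_cycles K V E m. z \<notin> path_boundaries K V E m \<and>
        (\<forall>z'\<in>path_cycles K V E m. \<exists>a. (\<lambda>w. z' w - a * z w) \<in> path_boundaries K V E m))"

definition path_homology_is_zero :: "'k::field itself \<Rightarrow> 'v set \<Rightarrow> ('v \<Rightarrow> 'v \<Rightarrow> bool) \<Rightarrow> nat \<Rightarrow> bool" where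
  "path_homology_is_zero K V E m \<longleftrightarrow> path_cycles K V E m \<subseteq> path_boundaries K V E m"

definition circulant_arrow :: "nat \<Rightarrow> nat set \<Rightarrow> nat \<Rightarrow> nat \<Rightarrow> bool" where
  "circulant_arrow n S a b \<longleftrightarrow> (\<exists>s\<in>S. b = (a + s) mod n)"

end

theory Submission
  imports Defs "HOL-Library.Function_Algebras"
begin

text \<open>
  Write \<open>|b - a|\<close> for the forward distance from \<open>a\<close> to \<open>b\<close> in \<open>\<int>\<^sub>n\<close>.  The chain homotopy
  \<open>H\<close> replaces the first arrow \<open>a \<rightarrow> b\<close> of a path by the walk of unit steps
  \<open>a \<rightarrow> a+1 \<rightarrow> \<dots> \<rightarrow> b\<close>: \<open>H(a b \<rho>)\<close> is minus the sum of the paths \<open>(a+k, a+k+1, b, \<rho>)\<close>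
  over \<open>k < |b - a| - 1\<close>, and it maps allowed paths to allowed paths.  Since \<open>2d < n\<close>, the
  forward distances along two consecutive arrows add up without wrapping around \<open>\<int>\<^sub>n\<close>, and
  this makes \<open>\<partial>H + H\<partial>\<close> the identity on allowed paths with at least two arrows, while on an
  arrow \<open>[a,b]\<close> it leaves \<open>[a,b]\<close> minus its unit walk.  Hence every \<open>m\<close>-cycle \<open>z\<close> with
  \<open>m \<ge> 2\<close> is the boundary of \<open>Hz \<in> \<Omega>\<^sub>m\<^sub>+\<^sub>1\<close>, and every 1-cycle is homologous to a cycle
  supported on unit arrows, i.e. to a multiple of the cycle \<open>0 \<rightarrow> 1 \<rightarrow> \<dots> \<rightarrow> n-1 \<rightarrow> 0\<close>.
  That cycle is not a boundary: the functional "sum of forward distances" vanishes on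
  boundaries of allowed 2-paths but takes the value \<open>n \<noteq> 0\<close> on it.  In degree 0 the sum of
  coefficients plays the same role, and the unit walks connect every vertex to 0.
\<close>

section \<open>Chains of elementary paths\<close>

lemma sum_fun_apply: "(sum f A) x = (\<Sum>a\<in>A. f a x)"
  by (induction A rule: infinite_finite_induct) auto

lemma sum_lessThan_add_Suc:
  fixes f :: "nat \<Rightarrow> 'a::comm_monoid_add"
  shows "(\<Sum>k<m + Suc q. f k) = (\<Sum>k<m. f k) + f m + (\<Sum>i<q. f (Suc m + i))"
  by (induction q) (simp_all add: add.assoc)

definition epath :: "'v list \<Rightarrow> 'v list \<Rightarrow> 'k::comm_ring_1" where
  "epath u = (\<lambda>w. if w = u then 1 else 0)"

definition epath_reg :: "'v list \<Rightarrow> 'v list \<Rightarrow> 'k::comm_ring_1" where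
  "epath_reg u = (if regular_path u \<and> u \<noteq> [] then epath u else 0)"

definition scale_chain :: "'k::comm_ring_1 \<Rightarrow> ('v list \<Rightarrow> 'k) \<Rightarrow> 'v list \<Rightarrow> 'k" where
  "scale_chain a f = (\<lambda>w. a * f w)"

definition bd_epath :: "'v list \<Rightarrow> 'v list \<Rightarrow> 'k::comm_ring_1" where
  "bd_epath u = (\<Sum>j<length u. scale_chain ((-1) ^ j) (epath_reg (delete_at j u)))"

definition paths_of_length :: "'v set \<Rightarrow> nat \<Rightarrow> 'v list set" where
  "paths_of_length V l = {u. length u = l \<and> set u \<subseteq> V}"

lemma finite_paths_of_length: "finite V \<Longrightarrow> finite (paths_of_length V l)"
  using finite_lists_length_eq[of V l] by (simp add: paths_of_length_def conj_commute)

lemma delete_at_0 [simp]: "delete_at 0 (x # t) = t"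
  by (simp add: delete_at_def)

lemma delete_at_Suc [simp]: "delete_at (Suc j) (x # t) = x # delete_at j t"
  by (simp add: delete_at_def)

lemma length_delete_at: "j < length u \<Longrightarrow> length (delete_at j u) = length u - 1"
  by (simp add: delete_at_def)

lemma set_delete_at: "set (delete_at j u) \<subseteq> set u"
  unfolding delete_at_def by (auto dest: in_set_takeD in_set_dropD)

lemma consecutive_Cons2:
  "(\<forall>i. Suc i < length (x # y # t) \<longrightarrow> P ((x # y # t) ! i) ((x # y # t) ! Suc i)) \<longleftrightarrow>
   P x y \<and> (\<forall>i. Suc i < length (y # t) \<longrightarrow> P ((y # t) ! i) ((y # t) ! Suc i))"
  by (auto simp: less_Suc_eq_0_disj)

lemma regular_path_singleton [simp]: "regular_path [x]"
  by (simp add: regular_path_def)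

lemma regular_path_Cons2 [simp]: "regular_path (x # y # t) \<longleftrightarrow> x \<noteq> y \<and> regular_path (y # t)"
  unfolding regular_path_def by (rule consecutive_Cons2)

lemma scale_chain_apply [simp]: "scale_chain a f w = a * f w"
  by (simp add: scale_chain_def)

lemma scale_chain_zero [simp]: "scale_chain 0 f = 0"
  by (rule ext) simp

lemma scale_chain_one [simp]: "scale_chain 1 f = f"
  by (rule ext) simp

lemma scale_chain_zero_right [simp]: "scale_chain a 0 = 0"
  by (rule ext) simp

lemma scale_chain_minus: "scale_chain (- a) f = - scale_chain a f"
  by (rule ext) simp

lemma scale_chain_add: "scale_chain a (f + g) = scale_chain a f + scale_chain a g"
  by (rule ext) (simp add: distrib_left)

lemma scale_chain_diff: "scale_chain a (f - g) = scale_chain a f - scale_chain a g"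
  by (rule ext) (simp add: right_diff_distrib)

lemma scale_chain_sum: "scale_chain a (sum F K) = (\<Sum>k\<in>K. scale_chain a (F k))"
  by (rule ext) (simp add: sum_fun_apply sum_distrib_left)

lemma path_bd_add: "path_bd V (f + g) = path_bd V f + path_bd V g"
  by (rule ext) (simp add: path_bd_def distrib_right sum.distrib)

lemma path_bd_scale: "path_bd V (scale_chain a f) = scale_chain a (path_bd V f)"
  by (rule ext) (simp add: path_bd_def sum_distrib_left mult.assoc)

lemma path_bd_uminus: "path_bd V (- f) = - path_bd V f"
  by (rule ext) (simp add: path_bd_def sum_negf)

lemma path_bd_sum: "path_bd V (sum F K) = (\<Sum>k\<in>K. path_bd V (F k))"
proof (induction K rule: infinite_finite_induct)
  case (insert x K)
  then show ?case by (simp only: sum.insert[OF insert(1,2)] path_bd_add insert(3))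
qed (auto simp: path_bd_def fun_eq_iff)

lemma epath_reg_eq_epath: "regular_path u \<Longrightarrow> u \<noteq> [] \<Longrightarrow> epath_reg u = epath u"
  by (simp add: epath_reg_def)

lemma epath_reg_nonregular: "\<not> regular_path u \<Longrightarrow> epath_reg u = 0"
  by (simp add: epath_reg_def)

lemma path_bd_epath:
  assumes "finite V" "set s \<subseteq> V"
  shows "path_bd V (epath s :: 'v list \<Rightarrow> 'k::comm_ring_1) = bd_epath s"
proof (rule ext)
  fix w :: "'v list"
  have reg_apply: "epath_reg u w = (if regular_path w \<and> w \<noteq> [] then (if u = w then (1::'k) else 0) else 0)"
    for u by (auto simp: epath_reg_def epath_def)
  consider "\<not> (regular_path w \<and> w \<noteq> [])" | "length s \<noteq> Suc (length w)"
    | "regular_path w \<and> w \<noteq> []" "length s = Suc (length w)"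
    by blast
  then show "path_bd V (epath s) w = (bd_epath s w :: 'k)"
  proof cases
    case 1
    then have "path_bd V (epath s) w = 0" "bd_epath s w = (0::'k)"
      by (auto simp: path_bd_def bd_epath_def sum_fun_apply reg_apply)
    then show ?thesis by simp
  next
    case 2
    then have "path_bd V (epath s) w = 0"
      by (auto simp: path_bd_def epath_def intro!: sum.neutral)
    moreover have "bd_epath s w = (0::'k)"
      using 2 by (auto simp: bd_epath_def sum_fun_apply reg_apply length_delete_at intro!: sum.neutral)
    ultimately show ?thesis by simp
  next
    case 3
    have "path_bd V (epath s) w = (\<Sum>u\<in>paths_of_length V (Suc (length w)).
            if s = u then (\<Sum>j<length u. if delete_at j u = w then (-1) ^ j else (0::'k)) else 0)"
      using 3 by (auto simp: path_bd_def epath_def paths_of_length_def intro!: sum.cong)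
    also have "\<dots> = (\<Sum>j<length s. if delete_at j s = w then (-1) ^ j else (0::'k))"
      using 3 assms finite_paths_of_length[OF assms(1), of "Suc (length w)"]
      by (subst sum.delta') (auto simp: paths_of_length_def)
    also have "\<dots> = bd_epath s w"
      using 3 by (auto simp: bd_epath_def sum_fun_apply reg_apply intro!: sum.cong)
    finally show ?thesis .
  qed
qed

lemma bd_epath_Cons:
  "bd_epath (x # t) = epath_reg t - (\<Sum>j<length t. scale_chain ((-1) ^ j) (epath_reg (x # delete_at j t)))"
  unfolding bd_epath_def length_Cons sum.lessThan_Suc_shift by (simp add: scale_chain_minus sum_negf)

lemma bd_epath_Cons2:
  "bd_epath (x # y # t) = epath_reg (y # t) - epath_reg (x # t)
     + (\<Sum>j<length t. scale_chain ((-1) ^ j) (epath_reg (x # y # delete_at j t)))"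
  unfolding bd_epath_Cons[of x] length_Cons sum.lessThan_Suc_shift
  by (simp add: scale_chain_minus sum_negf)

lemma bd_epath_singleton: "bd_epath [a] = 0"
  by (simp add: bd_epath_Cons epath_reg_def)

lemma bd_epath_edge: "bd_epath [a, b] = epath [b] - epath [a]"
  by (simp add: bd_epath_Cons2 epath_reg_eq_epath)

lemma chain_expansion:
  assumes "finite S" "\<And>w. c w \<noteq> 0 \<Longrightarrow> w \<in> S"
  shows "c = (\<Sum>\<sigma>\<in>S. scale_chain (c \<sigma>) (epath \<sigma>))"
proof (rule ext)
  fix w
  have "(\<Sum>\<sigma>\<in>S. scale_chain (c \<sigma>) (epath \<sigma>)) w = (\<Sum>\<sigma>\<in>S. if \<sigma> = w then c \<sigma> else 0)"
    unfolding sum_fun_apply by (intro sum.cong) (auto simp: epath_def)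
  also have "\<dots> = c w"
    using assms by (auto simp: sum.delta')
  finally show "c w = (\<Sum>\<sigma>\<in>S. scale_chain (c \<sigma>) (epath \<sigma>)) w" by simp
qed

lemma A_space_support: "c \<in> A_space K V R p \<Longrightarrow> c w \<noteq> 0 \<Longrightarrow> w \<in> paths_of_length V (Suc p)"
  by (auto simp: A_space_def allowed_paths_def paths_of_length_def)

lemma A_space_expansion:
  assumes "finite V" "c \<in> A_space K V R p"
  shows "c = (\<Sum>\<sigma>\<in>paths_of_length V (Suc p). scale_chain (c \<sigma>) (epath \<sigma>))"
  using assms by (intro chain_expansion finite_paths_of_length A_space_support) auto

lemma path_bd_expansion:
  fixes c :: "'v list \<Rightarrow> 'k::comm_ring_1"
  assumes "finite V" "c \<in> A_space K V R p"
  shows "path_bd V c = (\<Sum>\<sigma>\<in>paths_of_length V (Suc p). scale_chain (c \<sigma>) (bd_epath \<sigma>))"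
proof -
  have "path_bd V c = path_bd V (\<Sum>\<sigma>\<in>paths_of_length V (Suc p). scale_chain (c \<sigma>) (epath \<sigma>))"
    by (rule arg_cong[OF A_space_expansion[OF assms]])
  also have "\<dots> = (\<Sum>\<sigma>\<in>paths_of_length V (Suc p). scale_chain (c \<sigma>) (bd_epath \<sigma>))"
    using assms(1) by (auto simp: path_bd_sum path_bd_scale path_bd_epath paths_of_length_def
        intro!: sum.cong)
  finally show ?thesis .
qed

lemma A_space_zero: "0 \<in> A_space K V R p"
  by (simp add: A_space_def)

lemma A_space_add: "f \<in> A_space K V R p \<Longrightarrow> g \<in> A_space K V R p \<Longrightarrow> f + g \<in> A_space K V R p"
  by (force simp: A_space_def)

lemma A_space_diff: "f \<in> A_space K V R p \<Longrightarrow> g \<in> A_space K V R p \<Longrightarrow> f - g \<in> A_space K V R p"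
  by (force simp: A_space_def)

lemma A_space_scale: "f \<in> A_space K V R p \<Longrightarrow> scale_chain a f \<in> A_space K V R p"
  by (force simp: A_space_def)

lemma A_space_sum: "(\<And>k. k \<in> S \<Longrightarrow> F k \<in> A_space K V R p) \<Longrightarrow> sum F S \<in> A_space K V R p"
proof (induction S rule: infinite_finite_induct)
  case (insert x S)
  then show ?case by (simp only: sum.insert[OF insert(1,2)]) (blast intro: A_space_add)
qed (auto simp: A_space_zero)

definition pairing :: "'v set \<Rightarrow> nat \<Rightarrow> ('v list \<Rightarrow> 'k) \<Rightarrow> ('v list \<Rightarrow> 'k) \<Rightarrow> 'k::comm_ring_1" where
  "pairing V l g c = (\<Sum>w\<in>paths_of_length V l. c w * g w)"

lemma pairing_add: "pairing V l g (f + h) = pairing V l g f + pairing V l g h"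
  by (simp add: pairing_def distrib_right sum.distrib)

lemma pairing_diff: "pairing V l g (f - h) = pairing V l g f - pairing V l g h"
  by (simp add: pairing_def left_diff_distrib sum_subtractf)

lemma pairing_scale: "pairing V l g (scale_chain a f) = a * pairing V l g f"
  by (simp add: pairing_def sum_distrib_left mult.assoc)

lemma pairing_sum: "pairing V l g (sum F S) = (\<Sum>k\<in>S. pairing V l g (F k))"
  unfolding pairing_def sum_fun_apply sum_distrib_right by (rule sum.swap)

lemma pairing_epath:
  assumes "finite V" "w \<in> paths_of_length V l"
  shows "pairing V l g (epath w) = g w"
proof -
  have "pairing V l g (epath w) = (\<Sum>u\<in>paths_of_length V l. if u = w then g u else 0)"
    unfolding pairing_def epath_def by (intro sum.cong) auto
  also have "\<dots> = g w"
    using assms by (simp add: finite_paths_of_length sum.delta')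
  finally show ?thesis .
qed

lemma pairing_path_bd_eq_0:
  fixes c :: "'v list \<Rightarrow> 'k::comm_ring_1"
  assumes "finite V" "c \<in> A_space K V R p"
    and "\<And>\<sigma>. \<sigma> \<in> allowed_paths V R p \<Longrightarrow> pairing V p g (bd_epath \<sigma>) = 0"
  shows "pairing V p g (path_bd V c) = 0"
proof -
  have "pairing V p g (path_bd V c) = (\<Sum>\<sigma>\<in>paths_of_length V (Suc p). c \<sigma> * pairing V p g (bd_epath \<sigma>))"
    unfolding path_bd_expansion[OF assms(1,2)] pairing_sum pairing_scale ..
  also have "\<dots> = 0"
  proof (intro sum.neutral ballI)
    fix \<sigma> show "c \<sigma> * pairing V p g (bd_epath \<sigma>) = 0"
      using assms(2,3) by (cases "c \<sigma> = 0") (auto simp: A_space_def)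
  qed
  finally show ?thesis .
qed

lemma epath_vertex_not_boundary:
  assumes "finite V" "v \<in> V"
  shows "(epath [v] :: 'v list \<Rightarrow> 'k::comm_ring_1) \<notin> path_boundaries TYPE('k) V R 0"
proof
  assume "epath [v] \<in> path_boundaries TYPE('k) V R 0"
  then obtain b where b: "b \<in> A_space TYPE('k) V R 1" "epath [v] = path_bd V b"
    by (auto simp: path_boundaries_def Omega_space_def)
  have "pairing V 1 (\<lambda>_. 1) (path_bd V b) = (0::'k)"
  proof (rule pairing_path_bd_eq_0[OF assms(1) b(1)])
    fix \<sigma> assume "\<sigma> \<in> allowed_paths V R 1"
    then obtain x y where "\<sigma> = [x, y]" "x \<in> V" "y \<in> V"
      by (auto simp: allowed_paths_def length_Suc_conv)
    then show "pairing V 1 (\<lambda>_. 1) (bd_epath \<sigma>) = (0::'k)"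
      using assms(1) by (simp add: bd_epath_edge pairing_diff pairing_epath paths_of_length_def)
  qed
  moreover have "pairing V 1 (\<lambda>_. 1) (epath [v]) = (1::'k)"
    using assms by (simp add: pairing_epath paths_of_length_def)
  ultimately show False
    using b(2) by simp
qed

section \<open>Forward distance in \<open>\<int>\<^sub>n\<close>\<close>

definition fwd_dist :: "nat \<Rightarrow> nat \<Rightarrow> nat \<Rightarrow> nat" where
  "fwd_dist n a b = (b + n - a) mod n"

text \<open>The lemmas below assume \<open>a < n\<close>: for \<open>a \<ge> n\<close> the subtraction truncates.\<close>

lemma add_fwd_dist_mod: "a < n \<Longrightarrow> (a + fwd_dist n a b) mod n = b mod n"
proof -
  assume "a < n"
  then have "(a + fwd_dist n a b) mod n = (a + (b + (n - a))) mod n"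
    by (simp add: fwd_dist_def mod_add_right_eq)
  also have "a + (b + (n - a)) = b + n"
    using \<open>a < n\<close> by simp
  finally show ?thesis by simp
qed

lemma fwd_dist_unique:
  assumes "a < n" "t < n" "(a + t) mod n = c"
  shows "fwd_dist n a c = t"
proof -
  have "fwd_dist n a c = ((a + t) mod n + (n - a)) mod n"
    using assms by (simp add: fwd_dist_def)
  also have "\<dots> = (a + t + (n - a)) mod n"
    by (simp add: mod_add_left_eq)
  also have "a + t + (n - a) = t + n"
    using assms by simp
  finally show ?thesis
    using assms by simp
qed

lemma fwd_dist_less: "0 < n \<Longrightarrow> fwd_dist n a b < n"
  by (simp add: fwd_dist_def)

lemma fwd_dist_self [simp]: "fwd_dist n a a = 0"
  by (simp add: fwd_dist_def)

lemma fwd_dist_pos: "a < n \<Longrightarrow> b < n \<Longrightarrow> a \<noteq> b \<Longrightarrow> 0 < fwd_dist n a b"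
  using add_fwd_dist_mod[of a n b] by (cases "fwd_dist n a b") auto

lemma fwd_dist_not_reached:
  assumes "a < n" "b < n" "k < fwd_dist n a b"
  shows "(a + k) mod n \<noteq> b"
proof
  assume "(a + k) mod n = b"
  moreover have "k < n"
    using assms fwd_dist_less[of n a b] by simp
  ultimately have "fwd_dist n a b = k"
    using fwd_dist_unique[OF assms(1)] by blast
  with assms show False by simp
qed

lemma fwd_dist_trans:
  assumes "a < n" "b < n" "c < n" "fwd_dist n a b + fwd_dist n b c < n"
  shows "fwd_dist n a c = fwd_dist n a b + fwd_dist n b c"
proof (rule fwd_dist_unique[OF assms(1) assms(4)])
  have "(a + (fwd_dist n a b + fwd_dist n b c)) mod n = ((a + fwd_dist n a b) mod n + fwd_dist n b c) mod n"
    by (simp add: mod_add_left_eq add.assoc)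
  also have "\<dots> = c"
    using assms add_fwd_dist_mod[of a n b] add_fwd_dist_mod[of b n c] by simp
  finally show "(a + (fwd_dist n a b + fwd_dist n b c)) mod n = c" .
qed

lemma fwd_dist_Suc: "2 \<le> n \<Longrightarrow> x < n \<Longrightarrow> fwd_dist n x (Suc x mod n) = 1"
  by (intro fwd_dist_unique) auto

lemma mod_add_Suc_neq:
  assumes "2 \<le> n"
  shows "(a + k) mod n \<noteq> (a + Suc k) mod n"
proof -
  define x where "x = (a + k) mod n"
  have "x < n" "(a + Suc k) mod n = Suc x mod n"
    using assms by (simp_all add: x_def mod_Suc_eq)
  moreover have "Suc x mod n \<noteq> x"
    using \<open>x < n\<close> assms by (cases "Suc x = n") auto
  ultimately show ?thesis
    unfolding x_def by simp
qed

lemma circulant_arrow_iff_fwd_dist: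
  assumes "a < n" "b < n" "d < n"
  shows "circulant_arrow n {1..d} a b \<longleftrightarrow> 1 \<le> fwd_dist n a b \<and> fwd_dist n a b \<le> d"
proof
  assume "circulant_arrow n {1..d} a b"
  then obtain s where s: "s \<in> {1..d}" "b = (a + s) mod n"
    unfolding circulant_arrow_def by blast
  then have "fwd_dist n a b = s"
    using assms by (intro fwd_dist_unique) auto
  then show "1 \<le> fwd_dist n a b \<and> fwd_dist n a b \<le> d"
    using s by simp
next
  assume "1 \<le> fwd_dist n a b \<and> fwd_dist n a b \<le> d"
  moreover have "b = (a + fwd_dist n a b) mod n"
    using add_fwd_dist_mod[OF assms(1), of b] assms by simp
  ultimately show "circulant_arrow n {1..d} a b"
    unfolding circulant_arrow_def by auto
qed

lemma circulant_arrow_fwd_dist: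
  assumes "d < n" "a < n" "b < n" "circulant_arrow n {1..d} a b"
  shows "1 \<le> fwd_dist n a b" "fwd_dist n a b \<le> d" "a \<noteq> b"
  using circulant_arrow_iff_fwd_dist[OF assms(2,3,1)] assms(4) by auto

lemma circulant_arrow_unit:
  assumes "1 \<le> d"
  shows "circulant_arrow n {1..d} ((a + k) mod n) ((a + Suc k) mod n)"
  unfolding circulant_arrow_def using assms
  by (intro bexI[of _ 1]) (auto simp: mod_Suc_eq)

lemma allowed_paths_Cons2:
  "x # y # t \<in> allowed_paths V R (Suc p) \<longleftrightarrow> x \<in> V \<and> R x y \<and> y # t \<in> allowed_paths V R p"
  unfolding allowed_paths_def using consecutive_Cons2[of x y t R] by auto

lemma allowed_paths_edge: "[x, y] \<in> allowed_paths V R 1 \<longleftrightarrow> x \<in> V \<and> y \<in> V \<and> R x y"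
  using allowed_paths_Cons2[of x y "[]" V R 0] by (auto simp: allowed_paths_def)

lemma allowed_circulant_regular:
  assumes "d < n" "\<sigma> \<in> allowed_paths {..<n} (circulant_arrow n {1..d}) p"
  shows "regular_path \<sigma>"
  unfolding regular_path_def
proof (intro allI impI)
  fix i assume i: "Suc i < length \<sigma>"
  have V: "set \<sigma> \<subseteq> {..<n}"
    using assms(2) by (simp add: allowed_paths_def)
  have "circulant_arrow n {1..d} (\<sigma> ! i) (\<sigma> ! Suc i)"
    using assms(2) i by (simp add: allowed_paths_def)
  moreover have "\<sigma> ! i < n" "\<sigma> ! Suc i < n"
    using V i nth_mem by (metis Suc_lessD lessThan_iff subsetD)+
  ultimately show "\<sigma> ! i \<noteq> \<sigma> ! Suc i"
    using circulant_arrow_fwd_dist[OF assms(1)] by blast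
qed

section \<open>The chain homotopy\<close>

definition unit_walk :: "nat \<Rightarrow> nat \<Rightarrow> nat \<Rightarrow> nat list \<Rightarrow> nat list \<Rightarrow> 'k::comm_ring_1" where
  "unit_walk n a m t = (\<Sum>k<m. epath ((a + k) mod n # (a + Suc k) mod n # t))"

fun homotopy_basis :: "nat \<Rightarrow> nat list \<Rightarrow> nat list \<Rightarrow> 'k::comm_ring_1" where
  "homotopy_basis n (a # b # r) = - unit_walk n a (fwd_dist n a b - 1) (b # r)"
| "homotopy_basis n _ = 0"

definition homotopy :: "nat \<Rightarrow> (nat list \<Rightarrow> 'k) \<Rightarrow> nat list \<Rightarrow> 'k::comm_ring_1" where
  "homotopy n c = (\<lambda>w. \<Sum>u\<in>paths_of_length {..<n} (length w - 1). c u * homotopy_basis n u w)"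

lemma homotopy_add: "homotopy n (f + g) = homotopy n f + homotopy n g"
  by (rule ext) (simp add: homotopy_def distrib_right sum.distrib)

lemma homotopy_scale: "homotopy n (scale_chain a f) = scale_chain a (homotopy n f)"
  by (rule ext) (simp add: homotopy_def sum_distrib_left mult.assoc)

lemma homotopy_diff: "homotopy n (f - g) = homotopy n f - homotopy n g"
  by (rule ext) (simp add: homotopy_def left_diff_distrib sum_subtractf)

lemma homotopy_zero [simp]: "homotopy n 0 = 0"
  by (rule ext) (simp add: homotopy_def)

lemma homotopy_sum: "homotopy n (sum F K) = (\<Sum>k\<in>K. homotopy n (F k))"
proof (induction K rule: infinite_finite_induct)
  case (insert x K)
  then show ?case by (simp only: sum.insert[OF insert(1,2)] homotopy_add insert(3))
qed (auto simp: homotopy_def fun_eq_iff)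

lemma unit_walk_nonzero:
  assumes "unit_walk n a m t w \<noteq> (0::'k::comm_ring_1)"
  shows "\<exists>k<m. w = (a + k) mod n # (a + Suc k) mod n # t"
proof -
  have "\<exists>k\<in>{..<m}. epath ((a + k) mod n # (a + Suc k) mod n # t) w \<noteq> (0::'k)"
    using assms unfolding unit_walk_def sum_fun_apply by (meson sum.neutral)
  then show ?thesis by (auto simp: epath_def split: if_splits)
qed

lemma homotopy_basis_nonzero:
  assumes "homotopy_basis n s w \<noteq> (0::'k::comm_ring_1)"
  obtains a b r k where "s = a # b # r" "k < fwd_dist n a b - 1"
    "w = (a + k) mod n # (a + Suc k) mod n # b # r"
proof -
  obtain a b r where s: "s = a # b # r"
    using assms by (cases "(n, s)" rule: homotopy_basis.cases) auto
  then show ?thesis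
    using assms unit_walk_nonzero[of n a "fwd_dist n a b - 1" "b # r" w] that by auto
qed

lemma homotopy_epath:
  assumes "set s \<subseteq> {..<n}"
  shows "homotopy n (epath s) = (homotopy_basis n s :: nat list \<Rightarrow> 'k::comm_ring_1)"
proof (rule ext)
  fix w :: "nat list"
  have "homotopy n (epath s) w
      = (\<Sum>u\<in>paths_of_length {..<n} (length w - 1). if s = u then (homotopy_basis n u w :: 'k) else 0)"
    unfolding homotopy_def by (intro sum.cong) (auto simp: epath_def)
  also have "\<dots> = (if s \<in> paths_of_length {..<n} (length w - 1) then homotopy_basis n s w else 0)"
    by (simp add: finite_paths_of_length)
  also have "\<dots> = homotopy_basis n s w"
    using assms by (cases "homotopy_basis n s w = (0::'k)")
      (auto elim!: homotopy_basis_nonzero simp: paths_of_length_def)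
  finally show "homotopy n (epath s) w = (homotopy_basis n s w :: 'k)" .
qed

lemma homotopy_in_A_space:
  fixes c :: "nat list \<Rightarrow> 'k::comm_ring_1"
  assumes "1 \<le> d" "d < n" "c \<in> A_space K {..<n} (circulant_arrow n {1..d}) (Suc p)"
  shows "homotopy n c \<in> A_space K {..<n} (circulant_arrow n {1..d}) (Suc (Suc p))"
  unfolding A_space_def
proof (intro CollectI allI impI)
  let ?R = "circulant_arrow n {1..d}"
  fix w assume "homotopy n c w \<noteq> 0"
  then obtain u where u: "c u \<noteq> 0" "homotopy_basis n u w \<noteq> (0::'k)"
    unfolding homotopy_def by (metis (no_types, lifting) mult_not_zero sum.neutral)
  then obtain a b r k where abk: "u = a # b # r" "k < fwd_dist n a b - 1"
      "w = (a + k) mod n # (a + Suc k) mod n # b # r"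
    by (auto elim: homotopy_basis_nonzero)
  have u_allowed: "u \<in> allowed_paths {..<n} ?R (Suc p)"
    using u(1) assms(3) by (auto simp: A_space_def)
  then have ab: "a < n" "b < n" "?R a b" and rest: "b # r \<in> allowed_paths {..<n} ?R p"
    unfolding abk(1) allowed_paths_Cons2 by (auto simp: allowed_paths_def)
  define s where "s = fwd_dist n a b"
  have "s \<le> d"
    using circulant_arrow_fwd_dist[OF assms(2) ab] by (simp add: s_def)
  have "fwd_dist n ((a + Suc k) mod n) b = s - Suc k"
  proof (rule fwd_dist_unique)
    have "((a + Suc k) mod n + (s - Suc k)) mod n = (a + Suc k + (s - Suc k)) mod n"
      by (simp add: mod_add_left_eq)
    also have "a + Suc k + (s - Suc k) = a + fwd_dist n a b"
      using abk(2) by (simp add: s_def)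
    finally show "((a + Suc k) mod n + (s - Suc k)) mod n = b"
      using add_fwd_dist_mod[OF ab(1), of b] ab(2) by simp
  qed (use assms \<open>s \<le> d\<close> in auto)
  moreover have "1 \<le> s - Suc k" "s - Suc k \<le> d"
    using abk(2) \<open>s \<le> d\<close> by (auto simp: s_def)
  ultimately have "?R ((a + Suc k) mod n) b"
    using circulant_arrow_iff_fwd_dist[of "(a + Suc k) mod n" n b d] ab(2) assms by simp
  then show "w \<in> allowed_paths {..<n} ?R (Suc (Suc p))"
    unfolding abk(3) allowed_paths_Cons2 using circulant_arrow_unit[OF assms(1)] rest assms by auto
qed

lemma path_bd_homotopy_basis:
  assumes "a < n" "b < n" "a \<noteq> b" "regular_path (b # \<rho>)" "set \<rho> \<subseteq> {..<n}"
  shows "path_bd {..<n} (homotopy_basis n (a # b # \<rho>) :: nat list \<Rightarrow> 'k::comm_ring_1) =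
    epath (a # b # \<rho>) - epath ((a + (fwd_dist n a b - 1)) mod n # b # \<rho>)
    - (\<Sum>k<fwd_dist n a b - 1. \<Sum>j<length (b # \<rho>).
         scale_chain ((-1) ^ j) (epath_reg ((a + k) mod n # (a + Suc k) mod n # delete_at j (b # \<rho>))))"
proof -
  define s where "s = fwd_dist n a b"
  have "0 < s"
    using fwd_dist_pos[OF assms(1-3)] by (simp add: s_def)
  define f :: "nat \<Rightarrow> nat list \<Rightarrow> 'k" where "f k = epath ((a + k) mod n # b # \<rho>)" for k
  define X :: "nat \<Rightarrow> nat list \<Rightarrow> 'k" where
    "X k = (\<Sum>j<length (b # \<rho>).
       scale_chain ((-1) ^ j) (epath_reg ((a + k) mod n # (a + Suc k) mod n # delete_at j (b # \<rho>))))" for k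
  have "path_bd {..<n} (epath ((a + k) mod n # (a + Suc k) mod n # b # \<rho>)) = f (Suc k) - f k + X k"
    if "k < s - 1" for k
  proof -
    have "(a + Suc k) mod n \<noteq> b" "(a + k) mod n \<noteq> b"
      using fwd_dist_not_reached[OF assms(1,2), of "Suc k"] fwd_dist_not_reached[OF assms(1,2), of k] that
      by (simp_all add: s_def)
    then show ?thesis
      using assms by (simp add: path_bd_epath bd_epath_Cons2 epath_reg_eq_epath f_def X_def)
  qed
  then have "path_bd {..<n} (homotopy_basis n (a # b # \<rho>)) = - (\<Sum>k<s - 1. f (Suc k) - f k + X k)"
    by (simp add: s_def unit_walk_def path_bd_uminus path_bd_sum)
  also have "\<dots> = f 0 - f (s - 1) - (\<Sum>k<s - 1. X k)"
    by (simp add: sum.distrib sum_lessThan_telescope)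
  finally show ?thesis
    using assms(1) by (simp add: s_def f_def X_def)
qed

lemma homotopy_face_cancel:
  assumes "a < n" "b < n" "set y \<subseteq> {..<n}" "2 \<le> n"
  shows "(\<Sum>k<fwd_dist n a b - 1. epath_reg ((a + k) mod n # (a + Suc k) mod n # b # y))
      + homotopy n (epath_reg (a # b # y)) = (0 :: nat list \<Rightarrow> 'k::comm_ring_1)"
proof (cases "regular_path (a # b # y)")
  case True
  have "epath_reg ((a + k) mod n # (a + Suc k) mod n # b # y)
      = (epath ((a + k) mod n # (a + Suc k) mod n # b # y) :: nat list \<Rightarrow> 'k)"
    if "k < fwd_dist n a b - 1" for k
    using True that fwd_dist_not_reached[OF assms(1,2), of "Suc k"] mod_add_Suc_neq[OF assms(4)]
    by (simp add: epath_reg_eq_epath)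
  moreover have "homotopy n (epath_reg (a # b # y)) = - (unit_walk n a (fwd_dist n a b - 1) (b # y) :: nat list \<Rightarrow> 'k)"
    using True assms by (simp add: epath_reg_eq_epath homotopy_epath)
  ultimately show ?thesis
    by (simp add: unit_walk_def)
next
  case False
  have "(\<Sum>k<fwd_dist n a b - 1. epath_reg ((a + k) mod n # (a + Suc k) mod n # b # y)) = (0 :: nat list \<Rightarrow> 'k)"
    using False by (cases "a = b") (auto intro!: sum.neutral simp: epath_reg_nonregular)
  then show ?thesis
    using False by (simp add: epath_reg_nonregular)
qed

lemma homotopy_identity_Cons2:
  assumes "a < n" "b < n" "a \<noteq> b" "regular_path (b # \<rho>)" "set \<rho> \<subseteq> {..<n}" "2 \<le> n"
  shows "path_bd {..<n} (homotopy_basis n (a # b # \<rho>)) + homotopy n (bd_epath (a # b # \<rho>)) =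
    epath (a # b # \<rho>) - epath ((a + (fwd_dist n a b - 1)) mod n # b # \<rho>) + homotopy_basis n (b # \<rho>)
    - ((\<Sum>k<fwd_dist n a b - 1. epath_reg ((a + k) mod n # (a + Suc k) mod n # \<rho>))
       + homotopy n (epath_reg (a # \<rho>)) :: nat list \<Rightarrow> 'k::comm_ring_1)"
proof -
  define s where "s = fwd_dist n a b"
  define \<tau> where "\<tau> = b # \<rho>"
  define F :: "nat \<Rightarrow> nat list \<Rightarrow> 'k" where
    "F j = (\<Sum>k<s - 1. epath_reg ((a + k) mod n # (a + Suc k) mod n # delete_at j \<tau>))" for j
  define G :: "nat \<Rightarrow> nat list \<Rightarrow> 'k" where "G j = homotopy n (epath_reg (a # delete_at j \<tau>))" for j
  have faces: "(\<Sum>k<s - 1. \<Sum>j<length \<tau>.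
      scale_chain ((-1) ^ j) (epath_reg ((a + k) mod n # (a + Suc k) mod n # delete_at j \<tau>)))
      = (\<Sum>j<length \<tau>. scale_chain ((-1) ^ j) (F j))"
    unfolding F_def scale_chain_sum by (rule sum.swap)
  have "homotopy n (epath_reg \<tau>) = (homotopy_basis n \<tau> :: nat list \<Rightarrow> 'k)"
    using assms by (simp add: \<tau>_def epath_reg_eq_epath homotopy_epath)
  then have hom_bd: "homotopy n (bd_epath (a # \<tau>)) = homotopy_basis n \<tau> - (\<Sum>j<length \<tau>. scale_chain ((-1) ^ j) (G j))"
    by (simp add: bd_epath_Cons homotopy_diff homotopy_sum homotopy_scale G_def)
  have "set (delete_at i \<rho>) \<subseteq> {..<n}" for i
    using set_delete_at assms(5) by (rule order_trans)
  \<comment> \<open>Deleting a vertex of \<open>\<rho>\<close> commutes with \<open>H\<close>, so only the faces at positions 0 and 1 survive.\<close>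
  then have "F (Suc i) + G (Suc i) = 0" for i
    using homotopy_face_cancel[OF assms(1,2) _ assms(6), of "delete_at i \<rho>"]
    by (simp add: F_def G_def \<tau>_def s_def)
  then have alternating: "(\<Sum>j<length \<tau>. scale_chain ((-1) ^ j) (F j))
      + (\<Sum>j<length \<tau>. scale_chain ((-1) ^ j) (G j)) = F 0 + G 0"
    by (simp add: \<tau>_def sum.lessThan_Suc_shift flip: sum.distrib scale_chain_add del: sum.lessThan_Suc)
  have "path_bd {..<n} (homotopy_basis n (a # \<tau>)) + homotopy n (bd_epath (a # \<tau>))
      = (epath (a # \<tau>) - epath ((a + (s - 1)) mod n # \<tau>) - (\<Sum>j<length \<tau>. scale_chain ((-1) ^ j) (F j)))
        + (homotopy_basis n \<tau> - (\<Sum>j<length \<tau>. scale_chain ((-1) ^ j) (G j)))"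
    using path_bd_homotopy_basis[OF assms(1-5), where 'k='k] faces hom_bd by (simp add: s_def \<tau>_def)
  also have "\<dots> = epath (a # \<tau>) - epath ((a + (s - 1)) mod n # \<tau>) + homotopy_basis n \<tau> - (F 0 + G 0)"
    using alternating by (simp add: algebra_simps)
  finally show ?thesis
    by (simp add: F_def G_def \<tau>_def s_def)
qed

lemma unit_walk_split:
  assumes "a < n" "(a + s) mod n = b" "1 \<le> s" "1 \<le> s'"
  shows "(unit_walk n a (s + s' - 1) t :: nat list \<Rightarrow> 'k::comm_ring_1) =
     unit_walk n a (s - 1) t + epath ((a + (s - 1)) mod n # b # t) + unit_walk n b (s' - 1) t"
proof -
  define f :: "nat \<Rightarrow> nat list \<Rightarrow> 'k" where "f k = epath ((a + k) mod n # (a + Suc k) mod n # t)" for k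
  have "(a + (s + j)) mod n = (b + j) mod n" for j
    using assms(2) by (metis add.assoc mod_add_left_eq)
  then have shift: "f (s + i) = epath ((b + i) mod n # (b + Suc i) mod n # t)" for i
    unfolding f_def by (metis add_Suc_right)
  have "unit_walk n a (s + s' - 1) t = (\<Sum>k<(s - 1) + Suc (s' - 1). f k)"
    using assms by (simp add: unit_walk_def f_def)
  also have "\<dots> = (\<Sum>k<s - 1. f k) + f (s - 1) + (\<Sum>i<s' - 1. f (s + i))"
    using sum_lessThan_add_Suc[of f "s - 1" "s' - 1"] assms(3) by simp
  also have "f (s - 1) = epath ((a + (s - 1)) mod n # b # t)"
    using assms by (simp add: f_def)
  also have "(\<Sum>i<s' - 1. f (s + i)) = unit_walk n b (s' - 1) t"
    by (simp only: unit_walk_def shift)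
  finally show ?thesis
    by (simp add: unit_walk_def f_def plus_fun_def)
qed

lemma homotopy_identity_long:
  assumes "a < n" "b < n" "c < n" "set r \<subseteq> {..<n}" "regular_path (a # b # c # r)"
    and "fwd_dist n a b + fwd_dist n b c < n"
  shows "path_bd {..<n} (homotopy_basis n (a # b # c # r)) + homotopy n (bd_epath (a # b # c # r))
       = (epath (a # b # c # r) :: nat list \<Rightarrow> 'k::comm_ring_1)"
proof -
  define s where "s = fwd_dist n a b"
  define s' where "s' = fwd_dist n b c"
  have ab: "a \<noteq> b" and bc: "b \<noteq> c" and reg: "regular_path (c # r)"
    using assms(5) by auto
  have "2 \<le> n"
    using assms(1,2) ab by linarith
  have "1 \<le> s" "1 \<le> s'"
    using fwd_dist_pos[OF assms(1,2) ab] fwd_dist_pos[OF assms(2,3) bc] by (simp_all add: s_def s'_def)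
  have ac: "fwd_dist n a c = s + s'"
    using fwd_dist_trans[OF assms(1-3,6)] by (simp add: s_def s'_def)
  then have "a \<noteq> c"
    using \<open>1 \<le> s\<close> by auto
  have bs: "(a + s) mod n = b"
    using add_fwd_dist_mod[OF assms(1), of b] assms(2) by (simp add: s_def)
  have walk_ac: "(\<Sum>k<s - 1. epath_reg ((a + k) mod n # (a + Suc k) mod n # c # r))
      = (unit_walk n a (s - 1) (c # r) :: nat list \<Rightarrow> 'k)"
    unfolding unit_walk_def
  proof (intro sum.cong refl)
    fix k assume "k \<in> {..<s - 1}"
    then have "(a + Suc k) mod n \<noteq> c"
      using fwd_dist_not_reached[OF assms(1,3), of "Suc k"] ac by simp
    then show "epath_reg ((a + k) mod n # (a + Suc k) mod n # c # r)
        = (epath ((a + k) mod n # (a + Suc k) mod n # c # r) :: nat list \<Rightarrow> 'k)"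
      using reg mod_add_Suc_neq[OF \<open>2 \<le> n\<close>] by (simp add: epath_reg_eq_epath)
  qed
  have hom_ac: "homotopy n (epath_reg (a # c # r)) = - (unit_walk n a (s + s' - 1) (c # r) :: nat list \<Rightarrow> 'k)"
    using \<open>a \<noteq> c\<close> reg assms(1,3,4) by (simp add: epath_reg_eq_epath homotopy_epath ac)
  have hom_bc: "homotopy_basis n (b # c # r) = - (unit_walk n b (s' - 1) (c # r) :: nat list \<Rightarrow> 'k)"
    by (simp add: s'_def)
  have "path_bd {..<n} (homotopy_basis n (a # b # c # r)) + homotopy n (bd_epath (a # b # c # r)) =
      epath (a # b # c # r) - epath ((a + (s - 1)) mod n # b # c # r) + homotopy_basis n (b # c # r)
      - ((\<Sum>k<s - 1. epath_reg ((a + k) mod n # (a + Suc k) mod n # c # r))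
         + homotopy n (epath_reg (a # c # r)) :: nat list \<Rightarrow> 'k)"
    using homotopy_identity_Cons2[OF assms(1,2) ab _ _ \<open>2 \<le> n\<close>, of "c # r"] assms(3-5)
    by (simp add: s_def)
  also have "\<dots> = epath (a # b # c # r)"
    unfolding walk_ac hom_ac hom_bc unit_walk_split[OF assms(1) bs \<open>1 \<le> s\<close> \<open>1 \<le> s'\<close>]
    by (simp add: algebra_simps)
  finally show ?thesis .
qed

lemma homotopy_identity_edge:
  assumes "a < n" "b < n" "a \<noteq> b"
  shows "path_bd {..<n} (homotopy_basis n [a, b]) + homotopy n (bd_epath [a, b])
       = (epath [a, b] - unit_walk n a (fwd_dist n a b) [] :: nat list \<Rightarrow> 'k::comm_ring_1)"
proof -
  define s where "s = fwd_dist n a b"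
  have "2 \<le> n"
    using assms by linarith
  have "1 \<le> s"
    using fwd_dist_pos[OF assms] by (simp add: s_def)
  have bs: "(a + s) mod n = b"
    using add_fwd_dist_mod[OF assms(1), of b] assms(2) by (simp add: s_def)
  have walk: "(\<Sum>k<s - 1. epath_reg [(a + k) mod n, (a + Suc k) mod n])
      = (unit_walk n a (s - 1) [] :: nat list \<Rightarrow> 'k)"
    unfolding unit_walk_def using mod_add_Suc_neq[OF \<open>2 \<le> n\<close>] by (simp add: epath_reg_eq_epath)
  have hom_a: "homotopy n (epath_reg [a]) = (0 :: nat list \<Rightarrow> 'k)"
    using assms(1) by (simp add: epath_reg_eq_epath homotopy_epath)
  have "path_bd {..<n} (homotopy_basis n [a, b]) + homotopy n (bd_epath [a, b]) =
      epath [a, b] - epath [(a + (s - 1)) mod n, b] + homotopy_basis n [b]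
      - ((\<Sum>k<s - 1. epath_reg [(a + k) mod n, (a + Suc k) mod n]) + homotopy n (epath_reg [a])
         :: nat list \<Rightarrow> 'k)"
    using homotopy_identity_Cons2[OF assms _ _ \<open>2 \<le> n\<close>, of "[]"] by (simp add: s_def)
  also have "\<dots> = epath [a, b] - unit_walk n a s []"
  proof -
    have "unit_walk n a s [] = unit_walk n a (s - 1) [] + (epath [(a + (s - 1)) mod n, b] :: nat list \<Rightarrow> 'k)"
      using unit_walk_split[OF assms(1) bs \<open>1 \<le> s\<close> order_refl, of "[]"] by (simp add: unit_walk_def)
    then show ?thesis
      unfolding walk hom_a by (simp add: algebra_simps)
  qed
  finally show ?thesis
    by (simp add: s_def)
qed

lemma homotopy_identity_allowed:
  assumes "1 \<le> d" "2 * d < n" "\<sigma> \<in> allowed_paths {..<n} (circulant_arrow n {1..d}) (Suc (Suc p))"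
  shows "path_bd {..<n} (homotopy_basis n \<sigma>) + homotopy n (bd_epath \<sigma>) = (epath \<sigma> :: nat list \<Rightarrow> 'k::comm_ring_1)"
proof -
  let ?R = "circulant_arrow n {1..d}"
  have "d < n"
    using assms(2) by linarith
  obtain a b c r where \<sigma>: "\<sigma> = a # b # c # r"
    using assms(3) by (auto simp: allowed_paths_def length_Suc_conv)
  have V: "a < n" "b < n" "c < n" "set r \<subseteq> {..<n}"
    using assms(3) by (auto simp: allowed_paths_def \<sigma>)
  have "?R a b" "?R b c"
    using assms(3) unfolding \<sigma> allowed_paths_Cons2 by auto
  then have "fwd_dist n a b \<le> d" "fwd_dist n b c \<le> d"
    using circulant_arrow_fwd_dist[OF \<open>d < n\<close>] V by auto
  moreover have "regular_path \<sigma>"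
    using allowed_circulant_regular[OF \<open>d < n\<close> assms(3)] .
  ultimately show ?thesis
    using homotopy_identity_long[OF V] assms(2) by (simp add: \<sigma>)
qed

lemma chain_homotopy_expansion:
  fixes c :: "nat list \<Rightarrow> 'k::comm_ring_1"
  assumes "c \<in> A_space K {..<n} R p"
  shows "path_bd {..<n} (homotopy n c) + homotopy n (path_bd {..<n} c) =
     (\<Sum>\<sigma>\<in>paths_of_length {..<n} (Suc p).
        scale_chain (c \<sigma>) (path_bd {..<n} (homotopy_basis n \<sigma>) + homotopy n (bd_epath \<sigma>)))"
proof -
  let ?P = "paths_of_length {..<n} (Suc p)"
  have "homotopy n c = homotopy n (\<Sum>\<sigma>\<in>?P. scale_chain (c \<sigma>) (epath \<sigma>))"
    by (rule arg_cong[OF A_space_expansion[OF finite_lessThan assms]])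
  also have "\<dots> = (\<Sum>\<sigma>\<in>?P. scale_chain (c \<sigma>) (homotopy_basis n \<sigma>))"
    by (auto simp: homotopy_sum homotopy_scale homotopy_epath paths_of_length_def intro!: sum.cong)
  finally have "homotopy n c = \<dots>" .
  moreover have "path_bd {..<n} c = (\<Sum>\<sigma>\<in>?P. scale_chain (c \<sigma>) (bd_epath \<sigma>))"
    by (rule path_bd_expansion[OF finite_lessThan assms])
  ultimately show ?thesis
    by (simp add: path_bd_sum path_bd_scale homotopy_sum homotopy_scale sum.distrib scale_chain_add)
qed

lemma chain_homotopy:
  fixes c :: "nat list \<Rightarrow> 'k::comm_ring_1"
  assumes "1 \<le> d" "2 * d < n" "c \<in> A_space K {..<n} (circulant_arrow n {1..d}) (Suc (Suc p))"
  shows "path_bd {..<n} (homotopy n c) + homotopy n (path_bd {..<n} c) = c"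
proof -
  have "path_bd {..<n} (homotopy n c) + homotopy n (path_bd {..<n} c)
      = (\<Sum>\<sigma>\<in>paths_of_length {..<n} (Suc (Suc (Suc p))). scale_chain (c \<sigma>) (epath \<sigma>))"
    unfolding chain_homotopy_expansion[OF assms(3)]
  proof (intro sum.cong refl)
    fix \<sigma>
    show "scale_chain (c \<sigma>) (path_bd {..<n} (homotopy_basis n \<sigma>) + homotopy n (bd_epath \<sigma>))
        = scale_chain (c \<sigma>) (epath \<sigma>)"
    proof (cases "c \<sigma> = 0")
      case False
      then have "\<sigma> \<in> allowed_paths {..<n} (circulant_arrow n {1..d}) (Suc (Suc p))"
        using assms(3) by (auto simp: A_space_def)
      from homotopy_identity_allowed[OF assms(1,2) this, where 'k='k] show ?thesis
        by simp
    qed simp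
  qed
  also have "\<dots> = c"
    using A_space_expansion[OF finite_lessThan assms(3)] by simp
  finally show ?thesis .
qed

fun edge_unit_walk :: "nat \<Rightarrow> nat list \<Rightarrow> nat list \<Rightarrow> 'k::comm_ring_1" where
  "edge_unit_walk n [a, b] = unit_walk n a (fwd_dist n a b) []"
| "edge_unit_walk n _ = 0"

definition straighten :: "nat \<Rightarrow> (nat list \<Rightarrow> 'k) \<Rightarrow> nat list \<Rightarrow> 'k::comm_ring_1" where
  "straighten n c = (\<Sum>\<sigma>\<in>paths_of_length {..<n} 2. scale_chain (c \<sigma>) (edge_unit_walk n \<sigma>))"

lemma chain_homotopy_edges:
  fixes c :: "nat list \<Rightarrow> 'k::comm_ring_1"
  assumes "d < n" "c \<in> A_space K {..<n} (circulant_arrow n {1..d}) 1"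
  shows "path_bd {..<n} (homotopy n c) + homotopy n (path_bd {..<n} c) = c - straighten n c"
proof -
  have "path_bd {..<n} (homotopy n c) + homotopy n (path_bd {..<n} c)
      = (\<Sum>\<sigma>\<in>paths_of_length {..<n} 2. scale_chain (c \<sigma>) (epath \<sigma>) - scale_chain (c \<sigma>) (edge_unit_walk n \<sigma>))"
    unfolding chain_homotopy_expansion[OF assms(2)] numeral_2_eq_2 One_nat_def
  proof (intro sum.cong refl)
    fix \<sigma>
    show "scale_chain (c \<sigma>) (path_bd {..<n} (homotopy_basis n \<sigma>) + homotopy n (bd_epath \<sigma>))
        = scale_chain (c \<sigma>) (epath \<sigma>) - scale_chain (c \<sigma>) (edge_unit_walk n \<sigma>)"
    proof (cases "c \<sigma> = 0")
      case False
      then have allowed: "\<sigma> \<in> allowed_paths {..<n} (circulant_arrow n {1..d}) 1"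
        using assms(2) by (auto simp: A_space_def)
      then obtain a b where \<sigma>: "\<sigma> = [a, b]" "a < n" "b < n"
        by (auto simp: allowed_paths_def length_Suc_conv)
      moreover have "a \<noteq> b"
        using allowed_circulant_regular[OF assms(1) allowed] \<sigma> by simp
      ultimately show ?thesis
        using homotopy_identity_edge[of a n b, where 'k='k] by (simp add: scale_chain_diff)
    qed simp
  qed
  also have "\<dots> = c - straighten n c"
    using A_space_expansion[OF finite_lessThan assms(2)]
    by (simp add: straighten_def sum_subtractf numeral_2_eq_2)
  finally show ?thesis .
qed

section \<open>Homology of the circulant digraph\<close>

lemma path_bd_unit_walk:
  assumes "2 \<le> n"
  shows "path_bd {..<n} (unit_walk n a m []) = (epath [(a + m) mod n] - epath [a mod n] :: nat list \<Rightarrow> 'k::comm_ring_1)"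
proof -
  define f :: "nat \<Rightarrow> nat list \<Rightarrow> 'k" where "f k = epath [(a + k) mod n]" for k
  have "path_bd {..<n} (unit_walk n a m [] :: nat list \<Rightarrow> 'k) = (\<Sum>k<m. f (Suc k) - f k)"
    using assms by (simp add: unit_walk_def path_bd_sum path_bd_epath bd_epath_edge f_def)
  also have "\<dots> = f m - f 0"
    by (rule sum_lessThan_telescope)
  finally show ?thesis
    by (simp add: f_def)
qed

lemma unit_edges_in_A_space:
  assumes "1 \<le> d" "\<And>w. c w \<noteq> 0 \<Longrightarrow> \<exists>v<n. w = [v, Suc v mod n]"
  shows "c \<in> A_space K {..<n} (circulant_arrow n {1..d}) 1"
  unfolding A_space_def
proof (intro CollectI allI impI)
  fix w assume "c w \<noteq> 0"
  then obtain v where v: "v < n" "w = [v, Suc v mod n]"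
    using assms(2) by blast
  have "[v, Suc v mod n] \<in> allowed_paths {..<n} (circulant_arrow n {1..d}) 1"
    unfolding allowed_paths_edge using circulant_arrow_unit[OF assms(1), where n = n and a = v and k = 0] v(1) by simp
  then show "w \<in> allowed_paths {..<n} (circulant_arrow n {1..d}) 1"
    using v(2) by simp
qed

lemma unit_walk_support:
  assumes "0 < n" "unit_walk n a m [] w \<noteq> (0::'k::comm_ring_1)"
  shows "\<exists>v<n. w = [v, Suc v mod n]"
  using unit_walk_nonzero[OF assms(2)] assms(1) by (auto simp: mod_Suc_eq)

lemma path_homology_is_zero_circulant:
  assumes "1 \<le> d" "2 * d < n" "2 \<le> m"
  shows "path_homology_is_zero TYPE('k::field) {..<n} (circulant_arrow n {1..d}) m"
  unfolding path_homology_is_zero_def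
proof
  let ?R = "circulant_arrow n {1..d}"
  fix z :: "nat list \<Rightarrow> 'k" assume "z \<in> path_cycles TYPE('k) {..<n} ?R m"
  then have z: "z \<in> A_space TYPE('k) {..<n} ?R m" "path_bd {..<n} z = 0"
    by (auto simp: path_cycles_def Omega_space_def zero_fun_def)
  obtain p where m: "m = Suc (Suc p)"
    using assms(3) by (metis add_2_eq_Suc le_Suc_ex)
  have bd_hz: "path_bd {..<n} (homotopy n z) = z"
    using chain_homotopy[OF assms(1,2), of z] z by (simp add: m)
  moreover have "homotopy n z \<in> A_space TYPE('k) {..<n} ?R (Suc m)"
    using homotopy_in_A_space[OF assms(1), of n z "TYPE('k)" "Suc p"] z assms by (simp add: m)
  ultimately have "homotopy n z \<in> Omega_space TYPE('k) {..<n} ?R (Suc m)"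
    using z(1) by (simp add: Omega_space_def)
  then show "z \<in> path_boundaries TYPE('k) {..<n} ?R m"
    unfolding path_boundaries_def using bd_hz by (metis image_eqI)
qed

lemma epath_vertex_in_A_space: "v \<in> V \<Longrightarrow> epath [v] \<in> A_space K V R 0"
  by (auto simp: A_space_def epath_def allowed_paths_def)

lemma unit_walk_in_A_space:
  assumes "1 \<le> d" "0 < n"
  shows "(unit_walk n a m [] :: nat list \<Rightarrow> 'k::comm_ring_1) \<in> A_space K {..<n} (circulant_arrow n {1..d}) 1"
  using assms unit_walk_support[of n a m _, where 'k='k] by (intro unit_edges_in_A_space) auto

lemma vertex_chain_homologous:
  assumes "1 \<le> d" "d < n" "z \<in> A_space TYPE('k::comm_ring_1) {..<n} (circulant_arrow n {1..d}) 0"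
  shows "(\<lambda>w. z w - (\<Sum>v<n. z [v]) * epath [0] w)
      \<in> path_boundaries TYPE('k) {..<n} (circulant_arrow n {1..d}) 0"
proof -
  let ?R = "circulant_arrow n {1..d}"
  have "2 \<le> n"
    using assms by linarith
  have "z = (\<Sum>\<sigma>\<in>(\<lambda>v. [v]) ` {..<n}. scale_chain (z \<sigma>) (epath \<sigma>))"
    using assms(3) by (intro chain_expansion) (auto simp: A_space_def allowed_paths_def length_Suc_conv)
  also have "\<dots> = (\<Sum>v<n. scale_chain (z [v]) (epath [v]))"
    by (subst sum.reindex) (auto simp: inj_on_def)
  finally have z_expansion: "z = \<dots>" .
  define b where "b = (\<Sum>v<n. scale_chain (z [v]) (unit_walk n 0 v [] :: nat list \<Rightarrow> 'k))"
  have "path_bd {..<n} b = (\<Sum>v<n. scale_chain (z [v]) (epath [v] - epath [0]))"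
    using \<open>2 \<le> n\<close> by (simp add: b_def path_bd_sum path_bd_scale path_bd_unit_walk)
  also have "\<dots> = (\<Sum>v<n. scale_chain (z [v]) (epath [v])) - scale_chain (\<Sum>v<n. z [v]) (epath [0])"
    by (simp add: scale_chain_diff sum_subtractf fun_eq_iff sum_fun_apply sum_distrib_right)
  finally have bd_b: "path_bd {..<n} b = z - scale_chain (\<Sum>v<n. z [v]) (epath [0])"
    using z_expansion by simp
  have "b \<in> A_space TYPE('k) {..<n} ?R 1"
    unfolding b_def using assms(1) \<open>2 \<le> n\<close> by (intro A_space_sum A_space_scale unit_walk_in_A_space) auto
  moreover have "path_bd {..<n} b \<in> A_space TYPE('k) {..<n} ?R 0"
    unfolding bd_b using assms \<open>2 \<le> n\<close> by (intro A_space_diff A_space_scale epath_vertex_in_A_space) auto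
  ultimately have "b \<in> Omega_space TYPE('k) {..<n} ?R 1"
    by (simp add: Omega_space_def)
  moreover have "(\<lambda>w. z w - (\<Sum>v<n. z [v]) * epath [0] w) = path_bd {..<n} b"
    by (simp add: bd_b fun_eq_iff)
  ultimately show ?thesis
    unfolding path_boundaries_def by auto
qed

lemma path_homology_is_K_0_circulant:
  assumes "1 \<le> d" "d < n"
  shows "path_homology_is_K TYPE('k::field) {..<n} (circulant_arrow n {1..d}) 0"
  unfolding path_homology_is_K_def
proof (rule bexI[of _ "epath [0]"], intro conjI ballI)
  let ?R = "circulant_arrow n {1..d}"
  show "epath [0] \<in> path_cycles TYPE('k) {..<n} ?R 0"
    using assms by (auto simp: path_cycles_def Omega_space_def path_bd_epath bd_epath_singleton
        intro: epath_vertex_in_A_space)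
  show "epath [0] \<notin> path_boundaries TYPE('k) {..<n} ?R 0"
    using assms by (intro epath_vertex_not_boundary) auto
  fix z assume "z \<in> path_cycles TYPE('k) {..<n} ?R 0"
  then show "\<exists>a. (\<lambda>w. z w - a * epath [0] w) \<in> path_boundaries TYPE('k) {..<n} ?R 0"
    using vertex_chain_homologous[OF assms] by (auto simp: path_cycles_def Omega_space_def)
qed

lemma unit_cycle_in_path_cycles:
  assumes "1 \<le> d" "d < n"
  shows "(unit_walk n 0 n [] :: nat list \<Rightarrow> 'k::comm_ring_1)
      \<in> path_cycles TYPE('k) {..<n} (circulant_arrow n {1..d}) 1"
proof -
  have "2 \<le> n"
    using assms by linarith
  then have "path_bd {..<n} (unit_walk n 0 n []) = (0 :: nat list \<Rightarrow> 'k)"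
    by (simp add: path_bd_unit_walk)
  moreover have "(unit_walk n 0 n [] :: nat list \<Rightarrow> 'k) \<in> A_space TYPE('k) {..<n} (circulant_arrow n {1..d}) 1"
    using assms by (intro unit_walk_in_A_space) auto
  ultimately show ?thesis
    by (simp add: path_cycles_def Omega_space_def A_space_def zero_fun_def)
qed

lemma unit_cycle_not_boundary:
  assumes "1 \<le> d" "2 * d < n"
  shows "(unit_walk n 0 n [] :: nat list \<Rightarrow> 'k::{comm_ring_1,ring_char_0})
      \<notin> path_boundaries TYPE('k) {..<n} (circulant_arrow n {1..d}) 1"
proof
  let ?R = "circulant_arrow n {1..d}"
  have "2 \<le> n" "d < n"
    using assms by linarith+
  assume "unit_walk n 0 n [] \<in> path_boundaries TYPE('k) {..<n} ?R 1"
  then obtain b where b: "b \<in> A_space TYPE('k) {..<n} ?R 2" "unit_walk n 0 n [] = path_bd {..<n} b"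
    by (auto simp: path_boundaries_def Omega_space_def numeral_2_eq_2)
  define g :: "nat list \<Rightarrow> 'k" where "g w = of_nat (fwd_dist n (hd w) (hd (tl w)))" for w
  have "pairing {..<n} 2 g (path_bd {..<n} b) = 0"
  proof (rule pairing_path_bd_eq_0[OF finite_lessThan b(1)])
    fix \<sigma> assume allowed: "\<sigma> \<in> allowed_paths {..<n} ?R 2"
    then obtain x y e where \<sigma>: "\<sigma> = [x, y, e]" "x < n" "y < n" "e < n"
      by (auto simp: allowed_paths_def length_Suc_conv numeral_2_eq_2)
    have "?R x y" "?R y e"
      using allowed unfolding \<sigma> numeral_2_eq_2 allowed_paths_Cons2 by auto
    then have xy: "1 \<le> fwd_dist n x y" "fwd_dist n x y \<le> d" and ye: "1 \<le> fwd_dist n y e" "fwd_dist n y e \<le> d"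
      using circulant_arrow_fwd_dist[OF \<open>d < n\<close>] \<sigma> by auto
    then have xe: "fwd_dist n x e = fwd_dist n x y + fwd_dist n y e"
      using fwd_dist_trans[of x n y e] \<sigma> assms(2) by simp
    have "x \<noteq> y" "y \<noteq> e" "x \<noteq> e"
      using xy ye xe by auto
    then have "bd_epath \<sigma> = (epath [y, e] - epath [x, e] + epath [x, y] :: nat list \<Rightarrow> 'k)"
      by (simp add: \<sigma> bd_epath_Cons2 epath_reg_eq_epath)
    then show "pairing {..<n} 2 g (bd_epath \<sigma>) = 0"
      using \<sigma> by (simp add: pairing_add pairing_diff pairing_epath paths_of_length_def g_def xe)
  qed
  moreover have "pairing {..<n} 2 g (unit_walk n 0 n []) = of_nat n"
  proof -
    have "pairing {..<n} 2 g (unit_walk n 0 n []) = (\<Sum>k<n. pairing {..<n} 2 g (epath [k, Suc k mod n]))"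
      unfolding unit_walk_def pairing_sum by simp
    also have "\<dots> = (\<Sum>k<n. 1)"
      using \<open>2 \<le> n\<close> fwd_dist_Suc by (intro sum.cong) (auto simp: pairing_epath paths_of_length_def g_def)
    finally show ?thesis by simp
  qed
  ultimately show False
    using b(2) \<open>2 \<le> n\<close> by simp
qed

lemma path_bd_edge_unit_walk:
  assumes "a < n" "b < n" "2 \<le> n"
  shows "path_bd {..<n} (edge_unit_walk n [a, b]) = (bd_epath [a, b] :: nat list \<Rightarrow> 'k::comm_ring_1)"
  using assms path_bd_unit_walk[OF assms(3), of a "fwd_dist n a b"] add_fwd_dist_mod[OF assms(1), of b]
  by (simp add: bd_epath_edge)

lemma path_bd_straighten:
  fixes c :: "nat list \<Rightarrow> 'k::comm_ring_1"
  assumes "2 \<le> n" "c \<in> A_space K {..<n} R 1"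
  shows "path_bd {..<n} (straighten n c) = path_bd {..<n} c"
proof -
  have "path_bd {..<n} (straighten n c)
      = (\<Sum>\<sigma>\<in>paths_of_length {..<n} 2. scale_chain (c \<sigma>) (path_bd {..<n} (edge_unit_walk n \<sigma>)))"
    by (simp add: straighten_def path_bd_sum path_bd_scale)
  also have "\<dots> = (\<Sum>\<sigma>\<in>paths_of_length {..<n} 2. scale_chain (c \<sigma>) (bd_epath \<sigma>))"
  proof (intro sum.cong refl)
    fix \<sigma> assume "\<sigma> \<in> paths_of_length {..<n} 2"
    then obtain a b where "\<sigma> = [a, b]" "a < n" "b < n"
      by (auto simp: paths_of_length_def numeral_2_eq_2 length_Suc_conv)
    then show "scale_chain (c \<sigma>) (path_bd {..<n} (edge_unit_walk n \<sigma>)) = scale_chain (c \<sigma>) (bd_epath \<sigma>)"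
      using path_bd_edge_unit_walk[of a n b, where 'k='k] assms(1) by simp
  qed
  also have "\<dots> = path_bd {..<n} c"
    using path_bd_expansion[OF finite_lessThan assms(2)] by (simp add: numeral_2_eq_2)
  finally show ?thesis .
qed

lemma straighten_support:
  assumes "0 < n" "straighten n c w \<noteq> (0::'k::comm_ring_1)"
  shows "\<exists>v<n. w = [v, Suc v mod n]"
proof -
  have "\<exists>\<sigma>\<in>paths_of_length {..<n} 2. c \<sigma> * edge_unit_walk n \<sigma> w \<noteq> 0"
    using assms(2) unfolding straighten_def sum_fun_apply scale_chain_apply by (meson sum.neutral)
  then obtain \<sigma> where "edge_unit_walk n \<sigma> w \<noteq> (0::'k)"
    by (metis mult_zero_right)
  moreover from this obtain a b where "\<sigma> = [a, b]"
    by (cases "(n, \<sigma>)" rule: edge_unit_walk.cases) auto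
  ultimately show ?thesis
    using unit_walk_support[OF assms(1)] by auto
qed

lemma unit_edge_cycle_multiple:
  fixes y :: "nat list \<Rightarrow> 'k::comm_ring_1"
  assumes "2 \<le> n" "\<And>w. y w \<noteq> 0 \<Longrightarrow> \<exists>v<n. w = [v, Suc v mod n]" "path_bd {..<n} y = 0"
  shows "y = scale_chain (y [0, Suc 0]) (unit_walk n 0 n [])"
proof -
  define \<eta> where "\<eta> v = y [v, Suc v mod n]" for v
  have "y = (\<Sum>\<sigma>\<in>(\<lambda>v. [v, Suc v mod n]) ` {..<n}. scale_chain (y \<sigma>) (epath \<sigma>))"
    using assms(2) by (intro chain_expansion) auto
  also have "\<dots> = (\<Sum>v<n. scale_chain (\<eta> v) (epath [v, Suc v mod n]))"
    by (subst sum.reindex) (auto simp: inj_on_def \<eta>_def)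
  finally have y_expansion: "y = \<dots>" .
  have bd_y: "path_bd {..<n} y = (\<Sum>v<n. scale_chain (\<eta> v) (epath [Suc v mod n] - epath [v]))"
    using assms(1) by (subst y_expansion) (simp add: path_bd_sum path_bd_scale path_bd_epath bd_epath_edge)
  have "path_bd {..<n} y [Suc w] = \<eta> w - \<eta> (Suc w)" if "Suc w < n" for w
  proof -
    have "[Suc w] = [Suc v mod n] \<longleftrightarrow> v = w" if "v < n" for v
      using that \<open>Suc w < n\<close> by (cases "Suc v = n") auto
    then have "path_bd {..<n} y [Suc w]
        = (\<Sum>v<n. (if v = w then \<eta> v else 0) - (if v = Suc w then \<eta> v else 0))"
      unfolding bd_y sum_fun_apply by (intro sum.cong) (auto simp: epath_def)
    then show ?thesis
      using that by (simp add: sum_subtractf)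
  qed
  then have step: "\<eta> (Suc w) = \<eta> w" if "Suc w < n" for w
    using assms(3) that by simp
  have const: "\<eta> v = \<eta> 0" if "v < n" for v
    using that
  proof (induction v)
    case (Suc v)
    then show ?case using step[of v] by simp
  qed simp
  have "y = (\<Sum>v<n. scale_chain (\<eta> 0) (epath [v, Suc v mod n]))"
    unfolding y_expansion
  proof (intro sum.cong refl)
    fix v assume "v \<in> {..<n}"
    then show "scale_chain (\<eta> v) (epath [v, Suc v mod n]) = scale_chain (\<eta> 0) (epath [v, Suc v mod n])"
      using const[of v] by simp
  qed
  also have "\<dots> = scale_chain (y [0, Suc 0]) (unit_walk n 0 n [])"
    using assms(1) by (simp add: unit_walk_def scale_chain_sum \<eta>_def)
  finally show ?thesis .
qed

lemma cycle_homologous_unit_cycle: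
  assumes "1 \<le> d" "d < n" "z \<in> path_cycles TYPE('k::comm_ring_1) {..<n} (circulant_arrow n {1..d}) 1"
  shows "\<exists>a. (\<lambda>w. z w - a * unit_walk n 0 n [] w) \<in> path_boundaries TYPE('k) {..<n} (circulant_arrow n {1..d}) 1"
proof -
  let ?R = "circulant_arrow n {1..d}"
  have "2 \<le> n"
    using assms by linarith
  have z: "z \<in> A_space TYPE('k) {..<n} ?R 1" "path_bd {..<n} z = 0"
    using assms(3) by (auto simp: path_cycles_def Omega_space_def zero_fun_def)
  define y where "y = straighten n z"
  have bd_hz: "path_bd {..<n} (homotopy n z) = z - y"
    using chain_homotopy_edges[OF assms(2) z(1)] z(2) by (simp add: y_def)
  have y_support: "\<exists>v<n. w = [v, Suc v mod n]" if "y w \<noteq> 0" for w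
    using straighten_support[of n z w] that \<open>2 \<le> n\<close> by (simp add: y_def)
  have "path_bd {..<n} y = 0"
    using path_bd_straighten[OF \<open>2 \<le> n\<close> z(1)] z(2) by (simp add: y_def)
  then have y_multiple: "y = scale_chain (y [0, Suc 0]) (unit_walk n 0 n [])"
    using unit_edge_cycle_multiple[of n y, OF \<open>2 \<le> n\<close> y_support] by simp
  have "homotopy n z \<in> A_space TYPE('k) {..<n} ?R 2"
    using homotopy_in_A_space[OF assms(1,2), of z "TYPE('k)" 0] z(1) by (simp add: numeral_2_eq_2)
  moreover have "path_bd {..<n} (homotopy n z) \<in> A_space TYPE('k) {..<n} ?R 1"
  proof -
    have "y \<in> A_space TYPE('k) {..<n} ?R 1"
      by (rule unit_edges_in_A_space[OF assms(1)]) (rule y_support)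
    then show ?thesis
      unfolding bd_hz using z(1) by (rule A_space_diff[rotated])
  qed
  ultimately have "homotopy n z \<in> Omega_space TYPE('k) {..<n} ?R 2"
    by (simp add: Omega_space_def)
  moreover have "(\<lambda>w. z w - y [0, Suc 0] * unit_walk n 0 n [] w) = path_bd {..<n} (homotopy n z)"
    unfolding bd_hz by (subst (2) y_multiple) (simp add: fun_eq_iff)
  ultimately show ?thesis
    unfolding path_boundaries_def by (auto simp: numeral_2_eq_2)
qed

lemma path_homology_is_K_1_circulant:
  assumes "1 \<le> d" "2 * d < n"
  shows "path_homology_is_K TYPE('k::field_char_0) {..<n} (circulant_arrow n {1..d}) 1"
  unfolding path_homology_is_K_def
proof (rule bexI[of _ "unit_walk n 0 n []"], intro conjI ballI)
  have "d < n"
    using assms by linarith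
  then show "unit_walk n 0 n [] \<in> path_cycles TYPE('k) {..<n} (circulant_arrow n {1..d}) 1"
    using unit_cycle_in_path_cycles assms(1) by blast
  show "unit_walk n 0 n [] \<notin> path_boundaries TYPE('k) {..<n} (circulant_arrow n {1..d}) 1"
    using unit_cycle_not_boundary[OF assms] .
  fix z assume "z \<in> path_cycles TYPE('k) {..<n} (circulant_arrow n {1..d}) 1"
  then show "\<exists>a. (\<lambda>w. z w - a * unit_walk n 0 n [] w) \<in> path_boundaries TYPE('k) {..<n} (circulant_arrow n {1..d}) 1"
    using cycle_homologous_unit_cycle[OF assms(1) \<open>d < n\<close>] by blast
qed

theorem mainTheorem9:
  fixes n d :: nat
  assumes "2 < d" and "2 * d < n"
  shows "path_homology_is_K TYPE('k::field_char_0) {..<n} (circulant_arrow n {1..d}) 0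
       \<and> path_homology_is_K TYPE('k) {..<n} (circulant_arrow n {1..d}) 1
       \<and> (\<forall>m\<ge>2. path_homology_is_zero TYPE('k) {..<n} (circulant_arrow n {1..d}) m)"
proof -
  \<comment> \<open>The argument only needs \<open>1 \<le> d\<close>, not \<open>2 < d\<close>.\<close>
  have "1 \<le> d" "d < n"
    using assms by linarith+
  then show ?thesis
    using path_homology_is_K_0_circulant path_homology_is_K_1_circulant[OF \<open>1 \<le> d\<close> assms(2)]
      path_homology_is_zero_circulant[OF \<open>1 \<le> d\<close> assms(2)]
    by blast
qed

end
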